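(* Let $S \subseteq \mathbb{R}^n$ be nonempty, closed and convex, let $F = (F_1,\dots,F_m)^\top \colon S \to \mathbb{R}^m$ with each $F_i$ continuous and convex, and let $\ell > 0$. Define \[ u_\ell(x) := \max_{y \in S} \min_{i = 1,\dots,m} \left\{F_i(x) - F_i(y) - \frac{\ell}{2}\|x - y\|^2\right\}, \qquad U_\ell(x) := \operatorname*{argmax}_{y \in S} \min_{i = 1,\dots,m} \left\{F_i(x) - F_i(y) - \frac{\ell}{2}\|x - y\|^2\right\} \] for $x \in S$ (the maximizer is unique, so $U_\ell \colon S \to S$). Then $u_\ell$ and $U_\ell$ are continuous on $S$.
   Context: $\|\cdot\|$ is the Euclidean norm. *)

theory Defs
  imports "HOL-Analysis.Analysis"
begin

definition phi :: "real \<Rightarrow> (nat \<Rightarrow> real^'n \<Rightarrow> real) \<Rightarrow> nat \<Rightarrow> real^'n \<Rightarrow> real^'n \<Rightarrow> real" where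
  "phi l F m x y = Min ((\<lambda>i. F i x - F i y - (l / 2) * (norm (x - y))^2) ` {1..m})"

text \<open>u_l(x) = max over y in S of phi (the max is attained, so it equals the supremum).\<close>
definition u_fun :: "real \<Rightarrow> (nat \<Rightarrow> real^'n \<Rightarrow> real) \<Rightarrow> nat \<Rightarrow> (real^'n) set \<Rightarrow> real^'n \<Rightarrow> real" where
  "u_fun l F m S x = (SUP y\<in>S. phi l F m x y)"

definition U_fun :: "real \<Rightarrow> (nat \<Rightarrow> real^'n \<Rightarrow> real) \<Rightarrow> nat \<Rightarrow> (real^'n) set \<Rightarrow> real^'n \<Rightarrow> real^'n" where
  "U_fun l F m S x = (THE y. y \<in> S \<and> (\<forall>z\<in>S. phi l F m x z \<le> phi l F m x y))"

end

(* For fixed x, every y \<mapsto> F i x - F i y - l/2 |x - y|^2 is strongly concave with modulus l,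
   hence so is their minimum phi x. Convexity of F 1 forces phi x y < 0 far from x, so a
   maximizer exists, and strong concavity gives the quadratic growth
   phi x z + l/4 |z - U x|^2 \<le> phi x (U x), hence uniqueness. Moving the base point from x
   to x' changes phi by an affine function of y up to \<epsilon> = \<Sum>i |F i x' - F i x|; adding the
   growth inequalities at U x and U x' yields |U x' - U x|^2 \<le> 8 \<epsilon> / l + 4 |x' - x|^2.
   So U is continuous, and u x = phi x (U x) is continuous by composition. *)

theory Submission
  imports Defs
begin

lemma continuous_on_Min_image:
  fixes f :: "'i \<Rightarrow> 'a::topological_space \<Rightarrow> 'b::linorder_topology"
  assumes "finite I" "I \<noteq> {}" "\<And>i. i \<in> I \<Longrightarrow> continuous_on S (f i)"
  shows "continuous_on S (\<lambda>x. Min ((\<lambda>i. f i x) ` I))"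
  using assms
proof (induction I rule: finite_ne_induct)
  case (singleton i)
  then show ?case by simp
next
  case (insert j I)
  then have "continuous_on S (\<lambda>x. min (f j x) (Min ((\<lambda>i. f i x) ` I)))"
    by (intro continuous_on_min) auto
  with insert show ?case by simp
qed

lemma Min_image_le_Min_image_add:
  fixes f g :: "'i \<Rightarrow> 'a::linordered_ab_group_add"
  assumes "finite I" "I \<noteq> {}" "\<And>i. i \<in> I \<Longrightarrow> f i \<le> g i + c"
  shows "Min (f ` I) \<le> Min (g ` I) + c"
proof -
  have "Min (g ` I) \<in> g ` I" using assms(1,2) by simp
  then obtain j where j: "j \<in> I" "Min (g ` I) = g j" by auto
  have "Min (f ` I) \<le> f j" using assms(1) j(1) by simp
  also have "\<dots> \<le> g j + c" using assms(3) j(1) .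
  finally show ?thesis using j(2) by simp
qed

lemma abs_Min_image_diff_le:
  fixes f g :: "'i \<Rightarrow> real"
  assumes "finite I" "I \<noteq> {}" "\<And>i. i \<in> I \<Longrightarrow> \<bar>f i - g i\<bar> \<le> c"
  shows "\<bar>Min (f ` I) - Min (g ` I)\<bar> \<le> c"
proof -
  have "f i \<le> g i + c" "g i \<le> f i + c" if "i \<in> I" for i
    using assms(3)[OF that] unfolding abs_le_iff by linarith+
  then have "Min (f ` I) \<le> Min (g ` I) + c" "Min (g ` I) \<le> Min (f ` I) + c"
    using assms(1,2) by (simp_all add: Min_image_le_Min_image_add)
  then show ?thesis by (simp add: abs_le_iff algebra_simps)
qed

lemma power2_norm_diff_midpoint:
  fixes x a b :: "'a::real_inner"
  shows "(norm (x - midpoint a b))\<^sup>2 =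
    ((norm (x - a))\<^sup>2 + (norm (x - b))\<^sup>2) / 2 - (norm (a - b))\<^sup>2 / 4"
  unfolding power2_norm_eq_inner midpoint_def
  by (simp add: inner_diff_left inner_diff_right inner_add_left inner_add_right
      inner_commute algebra_simps field_simps)

lemma midpoint_in_convex:
  assumes "convex S" "a \<in> S" "b \<in> S"
  shows "midpoint a b \<in> S"
  using assms closed_segment_subset midpoint_in_closed_segment by blast

text \<open>Strong concavity with modulus c, tested at midpoints only: the case t = 1/2 of
  f((1-t)a + tb) \<ge> (1-t) f a + t f b + c/2 t(1-t) |a - b|^2.\<close>
definition midpoint_strongly_concave_on :: "'a::real_normed_vector set \<Rightarrow> real \<Rightarrow> ('a \<Rightarrow> real) \<Rightarrow> bool"
  where "midpoint_strongly_concave_on S c f \<longleftrightarrow>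
    (\<forall>a\<in>S. \<forall>b\<in>S. (f a + f b) / 2 + c / 8 * (norm (a - b))\<^sup>2 \<le> f (midpoint a b))"

lemma midpoint_strongly_concave_onD:
  "midpoint_strongly_concave_on S c f \<Longrightarrow> a \<in> S \<Longrightarrow> b \<in> S \<Longrightarrow>
    (f a + f b) / 2 + c / 8 * (norm (a - b))\<^sup>2 \<le> f (midpoint a b)"
  unfolding midpoint_strongly_concave_on_def by blast

lemma midpoint_strongly_concave_on_Min:
  assumes "finite I" "I \<noteq> {}" "\<And>i. i \<in> I \<Longrightarrow> midpoint_strongly_concave_on S c (f i)"
  shows "midpoint_strongly_concave_on S c (\<lambda>y. Min ((\<lambda>i. f i y) ` I))"
  unfolding midpoint_strongly_concave_on_def
proof (intro ballI)
  fix a b assume "a \<in> S" "b \<in> S"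
  have "(Min ((\<lambda>i. f i a) ` I) + Min ((\<lambda>i. f i b) ` I)) / 2 + c / 8 * (norm (a - b))\<^sup>2
      \<le> f i (midpoint a b)" if "i \<in> I" for i
  proof -
    have "Min ((\<lambda>i. f i a) ` I) \<le> f i a" "Min ((\<lambda>i. f i b) ` I) \<le> f i b"
      using assms(1) that by auto
    moreover have "(f i a + f i b) / 2 + c / 8 * (norm (a - b))\<^sup>2 \<le> f i (midpoint a b)"
      using assms(3)[OF that] \<open>a \<in> S\<close> \<open>b \<in> S\<close> by (rule midpoint_strongly_concave_onD)
    ultimately show ?thesis by (simp add: field_simps)
  qed
  then show "(Min ((\<lambda>i. f i a) ` I) + Min ((\<lambda>i. f i b) ` I)) / 2 + c / 8 * (norm (a - b))\<^sup>2
      \<le> Min ((\<lambda>i. f i (midpoint a b)) ` I)"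
    using assms(1,2) by simp
qed

lemma midpoint_strongly_concave_on_diff_convex_quadratic:
  fixes x :: "'a::real_inner"
  assumes "convex_on S g"
  shows "midpoint_strongly_concave_on S c (\<lambda>y. k - g y - c / 2 * (norm (x - y))\<^sup>2)"
  unfolding midpoint_strongly_concave_on_def
proof (intro ballI)
  fix a b assume "a \<in> S" "b \<in> S"
  have "g ((1 - 1/2) *\<^sub>R a + (1/2) *\<^sub>R b) \<le> (1 - 1/2) * g a + (1/2) * g b"
    using assms \<open>a \<in> S\<close> \<open>b \<in> S\<close> by (intro convex_onD) auto
  then have "g (midpoint a b) \<le> (g a + g b) / 2"
    by (simp add: midpoint_def scaleR_add_right)
  then show "((k - g a - c / 2 * (norm (x - a))\<^sup>2) + (k - g b - c / 2 * (norm (x - b))\<^sup>2)) / 2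
      + c / 8 * (norm (a - b))\<^sup>2 \<le> k - g (midpoint a b) - c / 2 * (norm (x - midpoint a b))\<^sup>2"
    unfolding power2_norm_diff_midpoint by (simp add: field_simps)
qed

lemma midpoint_strongly_concave_on_max_growth:
  assumes "convex S" "midpoint_strongly_concave_on S c f"
    and "y \<in> S" "\<forall>z\<in>S. f z \<le> f y" "z \<in> S"
  shows "f z + c / 4 * (norm (z - y))\<^sup>2 \<le> f y"
proof -
  have "f (midpoint y z) \<le> f y"
    using assms by (simp add: midpoint_in_convex)
  moreover have "(f y + f z) / 2 + c / 8 * (norm (y - z))\<^sup>2 \<le> f (midpoint y z)"
    using midpoint_strongly_concave_onD assms(2,3,5) .
  ultimately show ?thesis
    unfolding norm_minus_commute[of z y] by (simp add: field_simps)
qed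

lemma midpoint_strongly_concave_on_max_unique:
  assumes "convex S" "c > 0" "midpoint_strongly_concave_on S c f"
    and "y \<in> S" "\<forall>z\<in>S. f z \<le> f y" "y' \<in> S" "\<forall>z\<in>S. f z \<le> f y'"
  shows "y' = y"
proof -
  have "f y' + c / 4 * (norm (y' - y))\<^sup>2 \<le> f y"
    using assms by (intro midpoint_strongly_concave_on_max_growth)
  with assms have "c / 4 * (norm (y' - y))\<^sup>2 \<le> 0" by force
  with \<open>c > 0\<close> show ?thesis by (simp add: mult_le_0_iff)
qed

text \<open>Adding the growth inequalities of f at y and of g at y', the affine part contributes
  only c<v, y - y'>.\<close>
lemma midpoint_strongly_concave_on_max_stable:
  fixes v :: "'a::real_inner"
  assumes "convex S" "c > 0"
    and "midpoint_strongly_concave_on S c f" "y \<in> S" "\<forall>z\<in>S. f z \<le> f y"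
    and "midpoint_strongly_concave_on S c g" "y' \<in> S" "\<forall>z\<in>S. g z \<le> g y'"
    and "\<And>z. z \<in> S \<Longrightarrow> \<bar>g z - f z - (k - c * inner v z)\<bar> \<le> \<epsilon>"
  shows "(norm (y' - y))\<^sup>2 \<le> 8 * \<epsilon> / c + 4 * (norm v)\<^sup>2"
proof -
  define d where "d = norm (y' - y)"
  have "f y' + c / 4 * d\<^sup>2 \<le> f y"
    using midpoint_strongly_concave_on_max_growth[OF assms(1,3-5,7)] by (simp add: d_def)
  moreover have "g y + c / 4 * d\<^sup>2 \<le> g y'"
    using midpoint_strongly_concave_on_max_growth[OF assms(1,6-8,4)]
    by (simp add: d_def norm_minus_commute)
  moreover have "g y' - f y' \<le> k - c * inner v y' + \<epsilon>" "k - c * inner v y - \<epsilon> \<le> g y - f y"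
    using assms(9)[OF assms(4)] assms(9)[OF assms(7)] by (auto simp: abs_le_iff)
  ultimately have "c / 2 * d\<^sup>2 \<le> 2 * \<epsilon> + c * inner v (y - y')"
    by (simp add: inner_diff_right algebra_simps)
  also have "inner v (y - y') \<le> norm v * d"
    using norm_cauchy_schwarz[of v "y - y'"] by (simp add: d_def norm_minus_commute)
  also have "norm v * d \<le> (norm v)\<^sup>2 + d\<^sup>2 / 4"
    using sum_squares_ge_zero[of "norm v - d / 2" 0] by (simp add: power2_eq_square field_simps)
  finally have "c / 4 * d\<^sup>2 \<le> 2 * \<epsilon> + c * (norm v)\<^sup>2"
    using \<open>c > 0\<close> by (simp add: algebra_simps)
  with \<open>c > 0\<close> show ?thesis
    unfolding d_def[symmetric] by (simp add: field_simps)
qed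

lemma continuous_attains_sup_bounded_superlevel:
  fixes f :: "'a::heine_borel \<Rightarrow> real"
  assumes "closed S" "continuous_on S f" "x \<in> S" "bounded {y \<in> S. f x \<le> f y}"
  shows "\<exists>y\<in>S. \<forall>z\<in>S. f z \<le> f y"
proof -
  let ?K = "{y \<in> S. f x \<le> f y}"
  have "closed ?K"
    using continuous_on_closed_Collect_le[OF continuous_on_const assms(2,1)] .
  then have "compact ?K" using assms(4) compact_eq_bounded_closed by blast
  moreover have "?K \<noteq> {}" using assms(3) by auto
  moreover have "continuous_on ?K f" using assms(2) by (rule continuous_on_subset) auto
  ultimately have "\<exists>y\<in>?K. \<forall>z\<in>?K. f z \<le> f y" by (rule continuous_attains_sup)
  then obtain y where y: "y \<in> S" "f x \<le> f y" "\<And>z. z \<in> S \<Longrightarrow> f x \<le> f z \<Longrightarrow> f z \<le> f y"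
    by auto
  have "f z \<le> f y" if "z \<in> S" for z
    using y(2) y(3)[OF that] by linarith
  with y(1) show ?thesis by blast
qed

text \<open>Compare f y with f at the point where the segment from x to y crosses the unit
  sphere around x.\<close>
lemma convex_on_diff_le_mult_norm:
  fixes f :: "'a::real_normed_vector \<Rightarrow> real"
  assumes "convex_on S f" "x \<in> S" "y \<in> S" "1 \<le> norm (y - x)"
    and "\<And>z. z \<in> S \<Longrightarrow> norm (z - x) = 1 \<Longrightarrow> f x - f z \<le> M"
  shows "f x - f y \<le> M * norm (y - x)"
proof -
  define r where "r = norm (y - x)"
  define z where "z = (1 - 1 / r) *\<^sub>R x + (1 / r) *\<^sub>R y"
  have r: "1 \<le> r" using assms(4) by (simp add: r_def)
  have "z \<in> S"
    unfolding z_def using convex_on_imp_convex[OF assms(1)] assms(2,3) r by (intro convexD) auto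
  moreover have "z - x = (1 / r) *\<^sub>R (y - x)" by (simp add: z_def algebra_simps)
  then have "norm (z - x) = 1" using r by (auto simp: r_def)
  ultimately have "f x - f z \<le> M" by (rule assms(5))
  moreover have "f z \<le> (1 - 1 / r) * f x + (1 / r) * f y"
    unfolding z_def using assms(1-3) r by (intro convex_onD) auto
  moreover have "(1 - 1 / r) * f x + (1 / r) * f y = f x - (f x - f y) / r"
    using r by (simp add: field_simps)
  ultimately have "(f x - f y) / r \<le> M" by linarith
  moreover have "0 < r" using r by linarith
  ultimately show ?thesis by (simp add: r_def pos_divide_le_eq mult.commute)
qed

lemma bounded_convex_on_quadratic_decrease:
  fixes f :: "'a::euclidean_space \<Rightarrow> real"
  assumes "closed S" "convex_on S f" "continuous_on S f" "x \<in> S" "c > 0"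
  shows "bounded {y \<in> S. c * (norm (y - x))\<^sup>2 \<le> f x - f y}"
proof -
  have "compact (S \<inter> sphere x 1)" using assms(1) by (simp add: closed_Int_compact)
  then have "bounded ((\<lambda>z. f x - f z) ` (S \<inter> sphere x 1))"
    using assms(3) by (intro compact_imp_bounded compact_continuous_image continuous_intros)
      (auto intro: continuous_on_subset)
  then obtain M where "\<forall>w \<in> (\<lambda>z. f x - f z) ` (S \<inter> sphere x 1). \<bar>w\<bar> \<le> M"
    unfolding bounded_real by blast
  then have M: "f x - f z \<le> M" if "z \<in> S" "norm (z - x) = 1" for z
    using that by (force simp: dist_norm norm_minus_commute)
  have "norm (y - x) \<le> max 1 (M / c)" if y: "y \<in> S" "c * (norm (y - x))\<^sup>2 \<le> f x - f y" for y
  proof (rule ccontr)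
    assume "\<not> ?thesis"
    then have "1 \<le> norm (y - x)" "M / c < norm (y - x)" by auto
    then have far: "1 \<le> norm (y - x)" "M < norm (y - x) * c"
      using assms(5) by (simp_all add: pos_divide_less_eq)
    have "c * norm (y - x) * norm (y - x) \<le> M * norm (y - x)"
      using y convex_on_diff_le_mult_norm[OF assms(2,4) y(1) far(1) M]
      by (simp add: power2_eq_square mult.assoc)
    moreover have "0 < norm (y - x)" using far(1) by linarith
    ultimately have "c * norm (y - x) \<le> M" by (rule mult_right_le_imp_le)
    with far(2) show False by (simp add: mult.commute[of c])
  qed
  then have "{y \<in> S. c * (norm (y - x))\<^sup>2 \<le> f x - f y} \<subseteq> cball x (max 1 (M / c))"
    by (auto simp: dist_norm norm_minus_commute)
  then show ?thesis using bounded_cball bounded_subset by blast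
qed

lemma phi_le:
  "i \<in> {1..m} \<Longrightarrow> phi l F m x y \<le> F i x - F i y - l / 2 * (norm (x - y))\<^sup>2"
  unfolding phi_def by (intro Min_le) auto

lemma phi_self: "1 \<le> m \<Longrightarrow> phi l F m x x = 0"
  unfolding phi_def by (simp add: image_constant_conv)

lemma continuous_on_phi:
  assumes "1 \<le> m" "\<And>i. i \<in> {1..m} \<Longrightarrow> continuous_on S (F i)"
  shows "continuous_on S (phi l F m x)"
  unfolding phi_def
  by (intro continuous_on_Min_image continuous_intros assms) (use assms(1) in auto)

lemma midpoint_strongly_concave_on_phi:
  assumes "1 \<le> m" "\<And>i. i \<in> {1..m} \<Longrightarrow> convex_on S (F i)"
  shows "midpoint_strongly_concave_on S l (phi l F m x)"
  unfolding phi_def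
  by (intro midpoint_strongly_concave_on_Min midpoint_strongly_concave_on_diff_convex_quadratic assms)
    (use assms(1) in auto)

text \<open>The subtracted affine function of y comes from expanding the two squared distances.\<close>
lemma phi_perturbation:
  assumes "1 \<le> m" "\<And>i. i \<in> {1..m} \<Longrightarrow> \<bar>F i x' - F i x\<bar> \<le> \<epsilon>"
  shows "\<bar>phi l F m x' y - phi l F m x y
    - (l / 2 * ((norm x)\<^sup>2 - (norm x')\<^sup>2) - l * inner (x - x') y)\<bar> \<le> \<epsilon>"
proof -
  define q where "q = l / 2 * ((norm x)\<^sup>2 - (norm x')\<^sup>2) - l * inner (x - x') y"
  let ?f = "\<lambda>i. F i x' - F i y - l / 2 * (norm (x' - y))\<^sup>2"
  let ?g = "\<lambda>i. F i x - F i y - l / 2 * (norm (x - y))\<^sup>2 + q"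
  have "q = l / 2 * (norm (x - y))\<^sup>2 - l / 2 * (norm (x' - y))\<^sup>2"
    unfolding q_def power2_norm_eq_inner
    by (simp add: inner_diff_left inner_diff_right inner_commute algebra_simps)
  then have "?f i - ?g i = F i x' - F i x" for i
    by simp
  then have "\<bar>?f i - ?g i\<bar> \<le> \<epsilon>" if "i \<in> {1..m}" for i
    using assms(2)[OF that] by simp
  then have "\<bar>Min (?f ` {1..m}) - Min (?g ` {1..m})\<bar> \<le> \<epsilon>"
    by (rule abs_Min_image_diff_le[rotated 2]) (use assms(1) in auto)
  moreover have "Min (?g ` {1..m}) = phi l F m x y + q"
    unfolding phi_def using assms(1) by (simp add: Min_add_commute)
  ultimately show ?thesis
    unfolding phi_def[of l F m x'] q_def[symmetric] by (simp add: algebra_simps)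
qed

context
  fixes S :: "(real^'n) set" and F :: "nat \<Rightarrow> real^'n \<Rightarrow> real" and m :: nat and l :: real
  assumes closed: "closed S" and convex: "convex S" and m: "1 \<le> m"
    and continuous: "\<And>i. i \<in> {1..m} \<Longrightarrow> continuous_on S (F i)"
    and convex_on: "\<And>i. i \<in> {1..m} \<Longrightarrow> convex_on S (F i)"
    and l: "l > 0"
begin

lemma phi_midpoint_strongly_concave: "midpoint_strongly_concave_on S l (phi l F m x)"
  by (rule midpoint_strongly_concave_on_phi) (use m convex_on in auto)

lemma phi_has_max:
  assumes "x \<in> S"
  shows "\<exists>y\<in>S. \<forall>z\<in>S. phi l F m x z \<le> phi l F m x y"
proof (rule continuous_attains_sup_bounded_superlevel[OF closed _ assms])
  show "continuous_on S (phi l F m x)"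
    by (rule continuous_on_phi) (use m continuous in auto)
  have "1 \<in> {1..m}" using m by simp
  have "l / 2 * (norm (y - x))\<^sup>2 \<le> F 1 x - F 1 y" if "phi l F m x x \<le> phi l F m x y" for y
    using that phi_le[OF \<open>1 \<in> {1..m}\<close>, of l F x y] phi_self[OF m, of l F x]
    unfolding norm_minus_commute[of y x] by linarith
  then have "{y \<in> S. phi l F m x x \<le> phi l F m x y}
      \<subseteq> {y \<in> S. l / 2 * (norm (y - x))\<^sup>2 \<le> F 1 x - F 1 y}"
    by auto
  moreover have "bounded {y \<in> S. l / 2 * (norm (y - x))\<^sup>2 \<le> F 1 x - F 1 y}"
    using \<open>1 \<in> {1..m}\<close> l assms
    by (intro bounded_convex_on_quadratic_decrease closed convex_on continuous) auto
  ultimately show "bounded {y \<in> S. phi l F m x x \<le> phi l F m x y}"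
    by (rule bounded_subset[rotated])
qed

lemma U_fun_is_max:
  assumes "x \<in> S"
  shows "U_fun l F m S x \<in> S \<and> (\<forall>z\<in>S. phi l F m x z \<le> phi l F m x (U_fun l F m S x))"
proof -
  have "\<exists>!y. y \<in> S \<and> (\<forall>z\<in>S. phi l F m x z \<le> phi l F m x y)"
    using phi_has_max[OF assms]
      midpoint_strongly_concave_on_max_unique[OF convex l phi_midpoint_strongly_concave]
    by blast
  then show ?thesis unfolding U_fun_def by (rule theI')
qed

lemma u_fun_eq_phi_U_fun:
  assumes "x \<in> S"
  shows "u_fun l F m S x = phi l F m x (U_fun l F m S x)"
  unfolding u_fun_def using U_fun_is_max[OF assms] by (intro cSup_eq_maximum) auto

lemma U_fun_dist_bound:
  assumes "x \<in> S" "x' \<in> S"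
  shows "(norm (U_fun l F m S x' - U_fun l F m S x))\<^sup>2
    \<le> 8 * (\<Sum>i\<in>{1..m}. \<bar>F i x' - F i x\<bar>) / l + 4 * (norm (x' - x))\<^sup>2"
proof -
  have "\<bar>F i x' - F i x\<bar> \<le> (\<Sum>i\<in>{1..m}. \<bar>F i x' - F i x\<bar>)" if "i \<in> {1..m}" for i
    using that by (intro member_le_sum) auto
  then have "\<bar>phi l F m x' z - phi l F m x z
      - (l / 2 * ((norm x)\<^sup>2 - (norm x')\<^sup>2) - l * inner (x - x') z)\<bar>
      \<le> (\<Sum>i\<in>{1..m}. \<bar>F i x' - F i x\<bar>)" for z
    by (rule phi_perturbation[OF m])
  then have "(norm (U_fun l F m S x' - U_fun l F m S x))\<^sup>2
      \<le> 8 * (\<Sum>i\<in>{1..m}. \<bar>F i x' - F i x\<bar>) / l + 4 * (norm (x - x'))\<^sup>2"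
    using U_fun_is_max[OF assms(1)] U_fun_is_max[OF assms(2)]
    by (intro midpoint_strongly_concave_on_max_stable[OF convex l
        phi_midpoint_strongly_concave _ _ phi_midpoint_strongly_concave]) auto
  then show ?thesis by (simp add: norm_minus_commute)
qed

lemma continuous_on_U_fun: "continuous_on S (U_fun l F m S)"
  unfolding continuous_on_def
proof
  fix x assume "x \<in> S"
  define bound where "bound x' = sqrt (8 * (\<Sum>i\<in>{1..m}. \<bar>F i x' - F i x\<bar>) / l
    + 4 * (norm (x' - x))\<^sup>2)" for x'
  have "((\<lambda>x'. \<bar>F i x' - F i x\<bar>) \<longlongrightarrow> 0) (at x within S)" if "i \<in> {1..m}" for i
    using continuous[OF that] \<open>x \<in> S\<close>
    by (intro tendsto_rabs_zero LIM_zero) (simp add: continuous_on_def)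
  then have "((\<lambda>x'. \<Sum>i\<in>{1..m}. \<bar>F i x' - F i x\<bar>) \<longlongrightarrow> 0) (at x within S)"
    by (rule tendsto_null_sum)
  moreover have "((\<lambda>x'. norm (x' - x)) \<longlongrightarrow> 0) (at x within S)"
    by (intro tendsto_norm_zero LIM_zero tendsto_ident_at)
  ultimately have "(bound \<longlongrightarrow> sqrt (8 * 0 / l + 4 * 0\<^sup>2)) (at x within S)"
    unfolding bound_def by (intro tendsto_intros) (use l in auto)
  then have bound_tendsto: "(bound \<longlongrightarrow> 0) (at x within S)" by simp
  have "norm (U_fun l F m S x' - U_fun l F m S x) \<le> bound x'" if "x' \<in> S" for x'
    unfolding bound_def using U_fun_dist_bound[OF \<open>x \<in> S\<close> that] by (rule real_le_rsqrt)
  then have "\<forall>\<^sub>F x' in at x within S. norm (U_fun l F m S x' - U_fun l F m S x) \<le> bound x'"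
    unfolding eventually_at_filter by (intro always_eventually) blast
  then have "((\<lambda>x'. U_fun l F m S x' - U_fun l F m S x) \<longlongrightarrow> 0) (at x within S)"
    using bound_tendsto by (rule Lim_null_comparison)
  then show "(U_fun l F m S \<longlongrightarrow> U_fun l F m S x) (at x within S)"
    by (rule LIM_zero_cancel)
qed

lemma continuous_on_u_fun: "continuous_on S (u_fun l F m S)"
proof -
  have "U_fun l F m S ` S \<subseteq> S" using U_fun_is_max by blast
  then have "continuous_on S (\<lambda>x. F i (U_fun l F m S x))" if "i \<in> {1..m}" for i
    using continuous_on_compose2[OF continuous[OF that] continuous_on_U_fun] by blast
  then have "continuous_on S (\<lambda>x. phi l F m x (U_fun l F m S x))"
    unfolding phi_def using m
    by (intro continuous_on_Min_image continuous_intros continuous continuous_on_U_fun) auto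
  then show ?thesis
    by (rule continuous_on_cong[THEN iffD1, rotated 2]) (auto simp: u_fun_eq_phi_U_fun)
qed

end

theorem theorem3p4:
  fixes S :: "(real^'n) set" and F :: "nat \<Rightarrow> real^'n \<Rightarrow> real" and m :: nat and l :: real
  assumes "S \<noteq> {}" and "closed S" and "convex S"
    and "m \<ge> 1"
    and "\<And>i. i \<in> {1..m} \<Longrightarrow> continuous_on S (F i)"
    and "\<And>i. i \<in> {1..m} \<Longrightarrow> convex_on S (F i)"
    and "l > 0"
  shows "continuous_on S (u_fun l F m S) \<and> continuous_on S (U_fun l F m S)"
  by (intro conjI continuous_on_u_fun continuous_on_U_fun) (use assms in auto)

end
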